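(* Let $R$ be a unital associative ring. For every $A\in\widehat{\cal S}$ there is $x=x(A)\in R^*$ such that $\Phi^2(A)=x^{-1}\Phi^{-1}(A)x$. In particular, $\Phi^2(A)\sim\Phi^{-1}(A)$.
   Context: $R^*$: units of $R$. $M_3^*(R)$: invertible $3\times3$ matrices; $M_3^\star(R)$: matrices with all entries in $R^*$. $J_1(M)=M^{-1}$ on $M_3^*(R)$; $J_2(M)_{jk}=(M_{kj})^{-1}$ on $M_3^\star(R)$; $J=J_2\circ J_1$, $J^{-1}=J_1\circ J_2$, where $g\circ f$ has domain $\{x\in{\rm dom}(f):f(x)\in{\rm dom}(g)\}$. $\widehat M_3(R)$: matrices whose first row and column consist of $1$'s. For $A=\{a_{j,k}\}\in M_3^\star(R)$: $\Lambda^L(A)_{j,k}=a_{1,1}a_{j,1}^{-1}a_{j,k}a_{1,k}^{-1}$, $\Lambda^R(A)_{j,k}=a_{j,1}^{-1}a_{j,k}a_{1,k}^{-1}a_{1,1}$. $\Phi(A)=J_2(\Lambda^L(A^{-1}))$ with ${\rm dom}(\Phi)={\rm dom}(J)\cap\widehat M_3(R)\cap M_3^\star(R)$; $\Phi^2=\Phi\circ\Phi$; $\Phi^{-1}(A)=\Lambda^R(J^{-1}(A))$ with domain $\widehat M_3(R)\cap\{M\in{\rm dom}(J^{-1}):J^{-1}(M)\in M_3^\star(R)\}$. ${\cal S}=\{M\in M_3(R):$ all square submatrices of $M$ are invertible and $J_2(M)$ is invertible$\}$, $\widehat{\cal S}={\cal S}\cap\widehat M_3(R)$. For a matrix $B$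 and $x\in R^*$, $x^{-1}Bx$ is the matrix with entries $x^{-1}B_{jk}x$. $A\sim B$ means $B=D_1^{-1}AD_2$ for invertible diagonal $D_1,D_2$. *)

theory Defs
  imports Main "HOL-Library.Numeral_Type"
begin

text \<open>3x3 matrices over a unital associative ring 'a, indexed by the finite type 3
  (index 0 of type 3 corresponds to index 1 of the paper).
  Partial maps are modelled as option-valued functions.\<close>

type_synonym 'a mat3 = "3 \<Rightarrow> 3 \<Rightarrow> 'a"

definition is_runit :: "'a::{ring,monoid_mult} \<Rightarrow> bool" where
  "is_runit x \<longleftrightarrow> (\<exists>y. x * y = 1 \<and> y * x = 1)"

definition uinv :: "'a::{ring,monoid_mult} \<Rightarrow> 'a" where
  "uinv x = (THE y. x * y = 1 \<and> y * x = 1)"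

definition mmult :: "'a::{ring,monoid_mult} mat3 \<Rightarrow> 'a mat3 \<Rightarrow> 'a mat3" where
  "mmult A B = (\<lambda>j k. \<Sum>l\<in>UNIV. A j l * B l k)"

definition mone :: "'a::{ring,monoid_mult} mat3" where
  "mone = (\<lambda>j k. if j = k then 1 else 0)"

definition mat_invertible :: "'a::{ring,monoid_mult} mat3 \<Rightarrow> bool" where
  "mat_invertible A \<longleftrightarrow> (\<exists>B. mmult A B = mone \<and> mmult B A = mone)"

definition minv :: "'a::{ring,monoid_mult} mat3 \<Rightarrow> 'a mat3" where
  "minv A = (THE B. mmult A B = mone \<and> mmult B A = mone)"

text \<open>This does not depend on an ordering of I and K.\<close>
definition sub_invertible :: "'a::{ring,monoid_mult} mat3 \<Rightarrow> 3 set \<Rightarrow> 3 set \<Rightarrow> bool" where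
  "sub_invertible M I K \<longleftrightarrow>
     (\<exists>N :: 3 \<Rightarrow> 3 \<Rightarrow> 'a.
        (\<forall>i\<in>I. \<forall>i'\<in>I. (\<Sum>k\<in>K. M i k * N k i') = (if i = i' then 1 else 0)) \<and>
        (\<forall>k\<in>K. \<forall>k'\<in>K. (\<Sum>i\<in>I. N k i * M i k') = (if k = k' then 1 else 0)))"

definition all_units :: "'a::{ring,monoid_mult} mat3 \<Rightarrow> bool" where
  "all_units M \<longleftrightarrow> (\<forall>j k. is_runit (M j k))"

definition J1 :: "'a::{ring,monoid_mult} mat3 \<Rightarrow> 'a mat3 option" where
  "J1 M = (if mat_invertible M then Some (minv M) else None)"

definition J2 :: "'a::{ring,monoid_mult} mat3 \<Rightarrow> 'a mat3 option" where
  "J2 M = (if all_units M then Some (\<lambda>j k. uinv (M k j)) else None)"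

definition pcomp :: "('b \<Rightarrow> 'c option) \<Rightarrow> ('a \<Rightarrow> 'b option) \<Rightarrow> 'a \<Rightarrow> 'c option" where
  "pcomp g f x = (case f x of None \<Rightarrow> None | Some y \<Rightarrow> g y)"

definition J :: "'a::{ring,monoid_mult} mat3 \<Rightarrow> 'a mat3 option" where
  "J = pcomp J2 J1"

definition Jinv :: "'a::{ring,monoid_mult} mat3 \<Rightarrow> 'a mat3 option" where
  "Jinv = pcomp J1 J2"

definition hat :: "'a::{ring,monoid_mult} mat3 \<Rightarrow> bool" where
  "hat M \<longleftrightarrow> (\<forall>k. M 0 k = 1) \<and> (\<forall>j. M j 0 = 1)"

definition LambdaL :: "'a::{ring,monoid_mult} mat3 \<Rightarrow> 'a mat3" where
  "LambdaL A = (\<lambda>j k. A 0 0 * uinv (A j 0) * A j k * uinv (A 0 k))"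

definition LambdaR :: "'a::{ring,monoid_mult} mat3 \<Rightarrow> 'a mat3" where
  "LambdaR A = (\<lambda>j k. uinv (A j 0) * A j k * uinv (A 0 k) * A 0 0)"

definition Phi :: "'a::{ring,monoid_mult} mat3 \<Rightarrow> 'a mat3 option" where
  "Phi A = (if J A \<noteq> None \<and> hat A \<and> all_units A then J2 (LambdaL (minv A)) else None)"

definition Phi2 :: "'a::{ring,monoid_mult} mat3 \<Rightarrow> 'a mat3 option" where
  "Phi2 = pcomp Phi Phi"

definition Phi_inv :: "'a::{ring,monoid_mult} mat3 \<Rightarrow> 'a mat3 option" where
  "Phi_inv A = (if hat A \<and> (case Jinv A of None \<Rightarrow> False | Some B \<Rightarrow> all_units B)
                then Some (LambdaR (the (Jinv A))) else None)"

definition in_S :: "'a::{ring,monoid_mult} mat3 \<Rightarrow> bool" where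
  "in_S M \<longleftrightarrow>
     (\<forall>I K. I \<noteq> {} \<longrightarrow> card I = card K \<longrightarrow> sub_invertible M I K) \<and>
     (case J2 M of None \<Rightarrow> False | Some N \<Rightarrow> mat_invertible N)"

definition conj_mat :: "'a::{ring,monoid_mult} \<Rightarrow> 'a mat3 \<Rightarrow> 'a mat3" where
  "conj_mat x B = (\<lambda>j k. uinv x * B j k * x)"

definition is_diag :: "'a::{ring,monoid_mult} mat3 \<Rightarrow> bool" where
  "is_diag D \<longleftrightarrow> (\<forall>j k. j \<noteq> k \<longrightarrow> D j k = 0)"

definition diag_equiv :: "'a::{ring,monoid_mult} mat3 \<Rightarrow> 'a mat3 \<Rightarrow> bool" where
  "diag_equiv A B \<longleftrightarrow> (\<exists>D1 D2. is_diag D1 \<and> mat_invertible D1 \<and> is_diag D2 \<and> mat_invertible D2 \<and>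
      B = mmult (mmult (minv D1) A) D2)"

end

theory Submission
  imports Defs
begin

text \<open>Write \<open>B = A\<^sup>-\<^sup>1\<close> and \<open>C = J\<^sup>-\<^sup>1(A)\<close>, so that \<open>\<Phi>\<^sup>-\<^sup>1(A) = \<Lambda>\<^sup>R(C)\<close> and
  \<open>\<Phi>(A) = P\<close> with \<open>P j k = B 0 j * (B k j)\<^sup>-\<^sup>1 * B k 0 * (B 0 0)\<^sup>-\<^sup>1\<close>. That \<open>A\<close> lies in \<open>S\<close>
  makes all entries of \<open>B\<close> and \<open>C\<close> units (Jacobi's complementary minor theorem) and \<open>P\<close>
  invertible. The heart of the argument is that \<open>P W\<close> is diagonal for
  \<open>W l k = D l * (C k l)\<^sup>-\<^sup>1\<close> with \<open>D l = B 0 0 * (B l 0)\<^sup>-\<^sup>1 * d l\<close> and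
  \<open>d l = B l 1 * (A 1 (l+1) - A 1 (l+2)) * C 0 l\<close>: every off-diagonal entry is a telescoping
  sum over the cyclic group of indices. Hence \<open>P\<^sup>-\<^sup>1\<close> is the matrix \<open>((C k l)\<^sup>-\<^sup>1)\<close> rescaled
  by diagonal matrices, and as \<open>\<Lambda>\<^sup>L\<close> turns such a rescaling into conjugation by the first row
  factor \<open>D 0\<close>, we get \<open>\<Phi>(P) = D 0 * \<Lambda>\<^sup>R(C) * (D 0)\<^sup>-\<^sup>1\<close>.\<close>

lemma uinv_eqI:
  fixes x y :: "'a::{ring,monoid_mult}"
  assumes "x * y = 1" and "y * x = 1"
  shows "uinv x = y"
proof -
  have "\<exists>!y. x * y = 1 \<and> y * x = 1"
  proof (rule ex1I)
    show "x * y = 1 \<and> y * x = 1" using assms ..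
    show "z = y" if "x * z = 1 \<and> z * x = 1" for z
    proof -
      have "z = (z * x) * y" using assms(1) by (simp add: mult.assoc)
      then show ?thesis using that by simp
    qed
  qed
  then show ?thesis unfolding uinv_def using assms by (intro the1_equality) simp_all
qed

lemma is_runitI: "x * y = 1 \<Longrightarrow> y * x = 1 \<Longrightarrow> is_runit (x::'a::{ring,monoid_mult})"
  unfolding is_runit_def by blast

lemma runit_inverse:
  fixes x :: "'a::{ring,monoid_mult}"
  assumes "is_runit x"
  shows "x * uinv x = 1" and "uinv x * x = 1"
  using assms uinv_eqI unfolding is_runit_def by metis+

lemma runit_cancel:
  fixes x :: "'a::{ring,monoid_mult}"
  assumes "is_runit x"
  shows "x * (uinv x * t) = t" and "uinv x * (x * t) = t"
  using runit_inverse[OF assms] by (simp_all add: mult.assoc[symmetric])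

lemma runit_cancel_right:
  fixes x :: "'a::{ring,monoid_mult}"
  assumes "is_runit x"
  shows "t * x * uinv x = t" and "t * uinv x * x = t"
  using runit_inverse[OF assms] by (simp_all add: mult.assoc)

lemma is_runit_uinv: "is_runit x \<Longrightarrow> is_runit (uinv (x::'a::{ring,monoid_mult}))"
  using runit_inverse is_runitI by metis

lemma uinv_uinv: "is_runit x \<Longrightarrow> uinv (uinv (x::'a::{ring,monoid_mult})) = x"
  using runit_inverse uinv_eqI by metis

lemma
  fixes x y :: "'a::{ring,monoid_mult}"
  assumes "is_runit x" and "is_runit y"
  shows is_runit_mult: "is_runit (x * y)"
    and uinv_mult: "uinv (x * y) = uinv y * uinv x"
proof -
  have "(x * y) * (uinv y * uinv x) = 1" "(uinv y * uinv x) * (x * y) = 1"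
    using assms by (simp_all add: mult.assoc runit_cancel runit_inverse)
  then show "is_runit (x * y)" "uinv (x * y) = uinv y * uinv x"
    by (simp_all add: is_runitI uinv_eqI)
qed

lemma is_runit_one: "is_runit (1::'a::{ring,monoid_mult})"
  and uinv_one: "uinv (1::'a::{ring,monoid_mult}) = 1"
  using is_runitI[of 1 1] uinv_eqI[of 1 1] by simp_all

lemma is_runit_minus: "is_runit x \<Longrightarrow> is_runit (- (x::'a::{ring,monoid_mult}))"
  using is_runitI[of "-x" "- uinv x"] runit_inverse[of x] by simp

lemma is_runit_one_minus_uinv:
  fixes a :: "'a::{ring,monoid_mult}"
  assumes "is_runit a" and "is_runit (a - 1)"
  shows "is_runit (1 - uinv a)"
proof -
  have "1 - uinv a = uinv a * (a - 1)"
    using assms(1) by (simp add: algebra_simps runit_inverse)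
  then show ?thesis using assms by (simp add: is_runit_mult is_runit_uinv)
qed

lemma exhaust_3: "(x::3) = 0 \<or> x = 1 \<or> x = 2"
proof (cases x)
  case (of_int z)
  then have "z = 0 \<or> z = 1 \<or> z = 2" by auto
  then show ?thesis using of_int by auto
qed

lemma UNIV_3: "(UNIV::3 set) = {0, 1, 2}"
  using exhaust_3 by auto

lemma sum_UNIV_3: "(\<Sum>l\<in>(UNIV::3 set). f l) = f 0 + f 1 + f 2"
proof -
  have "(\<Sum>l\<in>(UNIV::3 set). f l) = f 0 + (f 1 + f 2)"
    by (simp only: UNIV_3) simp
  then show ?thesis by (simp add: add.assoc)
qed

lemma plus_3_simps:
  fixes j :: 3
  shows "j + 1 \<noteq> j" "j + 2 \<noteq> j" "j + 1 \<noteq> j + 2" "j + 1 + 1 = j + 2" "j + 2 + 1 = j"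
    "j + 2 + 2 = j + 1" "j + 1 + 2 = j"
  using exhaust_3[of j] by (elim disjE; simp)+

lemma sum_UNIV_3_rotate: "(\<Sum>l\<in>(UNIV::3 set). f l) = f j + f (j + 1) + f (j + 2)"
proof -
  have mod_3: "(3::3) = 0" "(4::3) = 1" by simp_all
  show ?thesis using exhaust_3[of j] by (elim disjE; simp add: sum_UNIV_3 ac_simps mod_3)
qed

lemma sum_UNIV_3_split:
  assumes "j \<noteq> 0" and "jb \<noteq> 0" and "j \<noteq> jb"
  shows "(\<Sum>l\<in>(UNIV::3 set). f l) = f 0 + f j + f jb"
proof -
  have "j = 1 \<and> jb = 2 \<or> j = 2 \<and> jb = 1"
    using assms exhaust_3[of j] exhaust_3[of jb] by auto
  then show ?thesis by (elim disjE conjE) (simp_all add: sum_UNIV_3 add_ac)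
qed

lemma UNIV_3_minus: "(UNIV::3 set) - {k} = {k + 1, k + 2}"
proof -
  have "x \<in> UNIV - {k} \<longleftrightarrow> x \<in> {k + 1, k + 2}" for x
    using exhaust_3[of x] exhaust_3[of k] by (elim disjE; simp)
  then show ?thesis by (rule set_eqI)
qed

lemma sum_UNIV_3_telescope: "(\<Sum>l\<in>(UNIV::3 set). g (l + 1) - g (l + 2)) = (0::'a::ab_group_add)"
proof -
  have mod_3: "(0::3) + 1 = 1" "(0::3) + 2 = 2" "(1::3) + 1 = 2" "(1::3) + 2 = 0"
    "(2::3) + 1 = 0" "(2::3) + 2 = 1" by simp_all
  show ?thesis by (simp only: sum_UNIV_3 mod_3) simp
qed

lemma mmult_entry: "mmult A B j k = A j 0 * B 0 k + A j 1 * B 1 k + A j 2 * B 2 k"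
  by (simp add: mmult_def sum_UNIV_3)

lemma mmult_assoc: "mmult (mmult A B) C = mmult A (mmult B C)"
  by (simp add: fun_eq_iff mmult_entry algebra_simps)

lemma mmult_mone_right: "mmult A mone = A"
  and mmult_mone_left: "mmult mone A = A"
  by (simp_all add: fun_eq_iff mmult_def mone_def if_distrib if_distribR cong: if_cong)

lemma minv_eqI:
  assumes "mmult A B = mone" and "mmult B A = mone"
  shows "minv A = B"
proof -
  have "\<exists>!B. mmult A B = mone \<and> mmult B A = mone"
  proof (rule ex1I)
    show "mmult A B = mone \<and> mmult B A = mone" using assms ..
    show "C = B" if "mmult A C = mone \<and> mmult C A = mone" for C
    proof -
      have "C = mmult (mmult C A) B" using assms(1) by (simp add: mmult_assoc mmult_mone_right)
      then show ?thesis using that by (simp add: mmult_mone_left)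
    qed
  qed
  then show ?thesis unfolding minv_def using assms by (intro the1_equality) simp_all
qed

lemma
  assumes "mat_invertible A"
  shows mmult_minv_right: "mmult A (minv A) = mone"
    and mmult_minv_left: "mmult (minv A) A = mone"
  using assms minv_eqI unfolding mat_invertible_def by metis+

lemma mmult_eq_mone_rotate:
  assumes "mmult X Y = mone"
  shows "X i j * Y j k + X i (j + 1) * Y (j + 1) k + X i (j + 2) * Y (j + 2) k
    = (if i = k then 1 else 0)"
  using fun_cong[OF fun_cong[OF assms, of i], of k]
  unfolding mmult_def mone_def by (simp add: sum_UNIV_3_rotate[of _ j])

lemma mmult_eq_mone_split:
  assumes "mmult X Y = mone" and "j \<noteq> 0" and "jb \<noteq> 0" and "j \<noteq> jb"
  shows "X i 0 * Y 0 k + X i j * Y j k + X i jb * Y jb k = (if i = k then 1 else 0)"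
  using fun_cong[OF fun_cong[OF assms(1), of i], of k]
  unfolding mmult_def mone_def by (simp add: sum_UNIV_3_split[OF assms(2-4)])

lemma mmult_eq_mone_entry:
  assumes "mmult X Y = mone"
  shows "X i 0 * Y 0 k + X i 1 * Y 1 k + X i 2 * Y 2 k = (if i = k then 1 else 0)"
  using mmult_eq_mone_rotate[OF assms, of i 0 k] by simp

section \<open>Invertible \<open>2 \<times> 2\<close> matrices\<close>

definition is_inverse2 :: "'a::{ring,monoid_mult} \<Rightarrow> 'a \<Rightarrow> 'a \<Rightarrow> 'a \<Rightarrow> 'a \<Rightarrow> 'a \<Rightarrow> 'a \<Rightarrow> 'a \<Rightarrow> bool"
  where "is_inverse2 x y z w a b c d \<longleftrightarrow>
    x * a + y * c = 1 \<and> x * b + y * d = 0 \<and> z * a + w * c = 0 \<and> z * b + w * d = 1 \<and>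
    a * x + b * z = 1 \<and> a * y + b * w = 0 \<and> c * x + d * z = 0 \<and> c * y + d * w = 1"

definition invertible2 :: "'a::{ring,monoid_mult} \<Rightarrow> 'a \<Rightarrow> 'a \<Rightarrow> 'a \<Rightarrow> bool"
  where "invertible2 x y z w \<longleftrightarrow> (\<exists>a b c d. is_inverse2 x y z w a b c d)"

lemma invertible2I: "is_inverse2 x y z w a b c d \<Longrightarrow> invertible2 x y z w"
  unfolding invertible2_def by blast

lemma invertible2_swap_cols:
  assumes "invertible2 x y z w"
  shows "invertible2 y x w z"
proof -
  obtain a b c d where "is_inverse2 x y z w a b c d"
    using assms unfolding invertible2_def by blast
  then have "is_inverse2 y x w z c d a b"
    unfolding is_inverse2_def by (simp add: add.commute)
  then show ?thesis by (rule invertible2I)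
qed

lemma invertible2_swap_rows:
  assumes "invertible2 x y z w"
  shows "invertible2 z w x y"
proof -
  obtain a b c d where "is_inverse2 x y z w a b c d"
    using assms unfolding invertible2_def by blast
  then have "is_inverse2 z w x y b a d c"
    unfolding is_inverse2_def by (simp add: add.commute)
  then show ?thesis by (rule invertible2I)
qed

lemma invertible2_uminus:
  assumes "invertible2 x y z w"
  shows "invertible2 (- x) (- y) (- z) (- w)"
proof -
  obtain a b c d where "is_inverse2 x y z w a b c d"
    using assms unfolding invertible2_def by blast
  then have "is_inverse2 (- x) (- y) (- z) (- w) (- a) (- b) (- c) (- d)"
    unfolding is_inverse2_def by simp
  then show ?thesis by (rule invertible2I)
qed

lemma invertible2_diag_mult:
  fixes x :: "'a::{ring,monoid_mult}"
  assumes inv: "invertible2 x y z w"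
    and units: "is_runit l1" "is_runit l2" "is_runit r1" "is_runit r2"
  shows "invertible2 (l1 * x * r1) (l1 * y * r2) (l2 * z * r1) (l2 * w * r2)"
proof -
  obtain a b c d where "is_inverse2 x y z w a b c d"
    using inv unfolding invertible2_def by blast
  then have e: "x*a + y*c = 1" "x*b + y*d = 0" "z*a + w*c = 0" "z*b + w*d = 1"
     "a*x + b*z = 1" "a*y + b*w = 0" "c*x + d*z = 0" "c*y + d*w = 1"
    unfolding is_inverse2_def by auto
  note cancel = units[THEN runit_cancel(1)] units[THEN runit_cancel(2)]
    units[THEN runit_inverse(1)] units[THEN runit_inverse(2)]
  define n11 where "n11 = uinv r1 * a * uinv l1"
  define n12 where "n12 = uinv r1 * b * uinv l2"
  define n21 where "n21 = uinv r2 * c * uinv l1"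
  define n22 where "n22 = uinv r2 * d * uinv l2"
  have "l1*x*r1*n11 + l1*y*r2*n21 = l1*((x*a + y*c)*uinv l1)"
    and "l1*x*r1*n12 + l1*y*r2*n22 = l1*((x*b + y*d)*uinv l2)"
    and "l2*z*r1*n11 + l2*w*r2*n21 = l2*((z*a + w*c)*uinv l1)"
    and "l2*z*r1*n12 + l2*w*r2*n22 = l2*((z*b + w*d)*uinv l2)"
    and "n11*(l1*x*r1) + n12*(l2*z*r1) = uinv r1*((a*x + b*z)*r1)"
    and "n11*(l1*y*r2) + n12*(l2*w*r2) = uinv r1*((a*y + b*w)*r2)"
    and "n21*(l1*x*r1) + n22*(l2*z*r1) = uinv r2*((c*x + d*z)*r1)"
    and "n21*(l1*y*r2) + n22*(l2*w*r2) = uinv r2*((c*y + d*w)*r2)"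
    unfolding n11_def n12_def n21_def n22_def by (simp_all add: algebra_simps cancel)
  then have "is_inverse2 (l1*x*r1) (l1*y*r2) (l2*z*r1) (l2*w*r2) n11 n12 n21 n22"
    unfolding is_inverse2_def using e cancel by simp
  then show ?thesis by (rule invertible2I)
qed

lemma is_runit_schur_complement:
  fixes x :: "'a::{ring,monoid_mult}"
  assumes inv: "invertible2 x y z w" and ux: "is_runit x"
  shows "is_runit (w - z * uinv x * y)"
proof -
  obtain a b c d where "is_inverse2 x y z w a b c d"
    using inv unfolding invertible2_def by blast
  then have e: "x * b + y * d = 0" "z * b + w * d = 1" "c * x + d * z = 0" "c * y + d * w = 1"
    unfolding is_inverse2_def by auto
  have "x * b = - (y * d)" using e(1) by (simp add: eq_neg_iff_add_eq_0)
  then have b: "b = - (uinv x * y * d)"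
    using runit_cancel(2)[OF ux, of b] by (simp add: mult.assoc)
  have "c * x = - (d * z)" using e(3) by (simp add: eq_neg_iff_add_eq_0)
  then have c: "c = - (d * z * uinv x)"
    using runit_cancel_right(1)[OF ux, of c] by (simp add: mult.assoc)
  have "(w - z * uinv x * y) * d = z * b + w * d"
    and "d * (w - z * uinv x * y) = c * y + d * w"
    by (simp_all add: b c algebra_simps)
  then show ?thesis using e by (intro is_runitI[of _ d]) simp_all
qed

lemma invertible2_if_schur_complement:
  fixes x :: "'a::{ring,monoid_mult}"
  assumes ux: "is_runit x" and uq: "is_runit (w - z * uinv x * y)"
  shows "invertible2 x y z w"
proof -
  define q where "q = w - z * uinv x * y"
  have w: "w = q + z * uinv x * y" unfolding q_def by simp
  have "is_inverse2 x y z w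
      (uinv x + uinv x * y * uinv q * z * uinv x) (- (uinv x * y * uinv q))
      (- (uinv q * z * uinv x)) (uinv q)"
    using uq unfolding is_inverse2_def w q_def[symmetric]
    by (simp add: algebra_simps ux runit_inverse runit_cancel)
  then show ?thesis by (rule invertible2I)
qed

lemma invertible2_uinv_transpose:
  fixes x :: "'a::{ring,monoid_mult}"
  assumes inv: "invertible2 x y z w"
    and units: "is_runit x" "is_runit y" "is_runit z" "is_runit w"
  shows "invertible2 (uinv x) (uinv z) (uinv y) (uinv w)"
proof (rule invertible2_if_schur_complement)
  show "is_runit (uinv x)" using units by (simp add: is_runit_uinv)
  have q: "is_runit (y - x * uinv z * w)"
    using is_runit_schur_complement[OF invertible2_swap_rows[OF inv] units(3)] .
  have "uinv w - uinv y * uinv (uinv x) * uinv z = uinv y * (y - x * uinv z * w) * uinv w"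
    using units by (simp add: uinv_uinv algebra_simps runit_inverse runit_cancel runit_cancel_right)
  then show "is_runit (uinv w - uinv y * uinv (uinv x) * uinv z)"
    using q units by (simp add: is_runit_mult is_runit_uinv)
qed

lemma invertible2_uinv_antitranspose:
  fixes x :: "'a::{ring,monoid_mult}"
  assumes "invertible2 x y z w" and "is_runit x" "is_runit y" "is_runit z" "is_runit w"
  shows "invertible2 (uinv w) (uinv y) (uinv z) (uinv x)"
  by (rule invertible2_uinv_transpose
      [OF invertible2_swap_rows[OF invertible2_swap_cols[OF assms(1)]] assms(5,4,3,2)])

lemma is_inverse2_solve_column:
  fixes x :: "'a::{ring,monoid_mult}"
  assumes "is_inverse2 x y z w a b c d" and "x * u + y * v = p" and "z * u + w * v = q"
  shows "u = a * p + b * q" and "v = c * p + d * q"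
proof -
  have e: "a*x + b*z = 1" "a*y + b*w = 0" "c*x + d*z = 0" "c*y + d*w = 1"
    using assms(1) unfolding is_inverse2_def by auto
  have "a * p + b * q = (a*x + b*z) * u + (a*y + b*w) * v"
    and "c * p + d * q = (c*x + d*z) * u + (c*y + d*w) * v"
    unfolding assms(2,3)[symmetric] by (simp_all add: algebra_simps)
  then show "u = a * p + b * q" and "v = c * p + d * q" using e by simp_all
qed

lemma is_inverse2_solve_row:
  fixes x :: "'a::{ring,monoid_mult}"
  assumes "is_inverse2 x y z w a b c d" and "u * x + v * z = p" and "u * y + v * w = q"
  shows "u = p * a + q * c" and "v = p * b + q * d"
proof -
  have e: "x*a + y*c = 1" "x*b + y*d = 0" "z*a + w*c = 0" "z*b + w*d = 1"
    using assms(1) unfolding is_inverse2_def by auto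
  have "p * a + q * c = u * (x*a + y*c) + v * (z*a + w*c)"
    and "p * b + q * d = u * (x*b + y*d) + v * (z*b + w*d)"
    unfolding assms(2,3)[symmetric] by (simp_all add: algebra_simps)
  then show "u = p * a + q * c" and "v = p * b + q * d" using e by simp_all
qed

section \<open>Minors\<close>

lemma is_runit_if_sub_invertible_singleton: "sub_invertible X {i} {k} \<Longrightarrow> is_runit (X i k)"
  unfolding sub_invertible_def is_runit_def by auto

lemma mat_invertible_if_sub_invertible_UNIV: "sub_invertible X UNIV UNIV \<Longrightarrow> mat_invertible X"
  unfolding sub_invertible_def mat_invertible_def mmult_def mone_def by (auto simp: fun_eq_iff)

lemma invertible2_if_sub_invertible:
  assumes "i1 \<noteq> i2" and "k1 \<noteq> k2" and "sub_invertible X {i1, i2} {k1, k2}"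
  shows "invertible2 (X i1 k1) (X i1 k2) (X i2 k1) (X i2 k2)"
proof -
  obtain N where
    "\<forall>i\<in>{i1,i2}. \<forall>i'\<in>{i1,i2}. (\<Sum>k\<in>{k1,k2}. X i k * N k i') = (if i = i' then 1 else 0)"
    "\<forall>k\<in>{k1,k2}. \<forall>k'\<in>{k1,k2}. (\<Sum>i\<in>{i1,i2}. N k i * X i k') = (if k = k' then 1 else 0)"
    using assms(3) unfolding sub_invertible_def by blast
  then have "is_inverse2 (X i1 k1) (X i1 k2) (X i2 k1) (X i2 k2) (N k1 i1) (N k1 i2) (N k2 i1) (N k2 i2)"
    unfolding is_inverse2_def using assms(1,2) by simp
  then show ?thesis by (rule invertible2I)
qed

text \<open>The minor complementary to the entry \<open>(k, j)\<close>; listing its rows and columns cyclically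
  avoids case distinctions on \<open>k\<close> and \<open>j\<close>.\<close>

definition minor_invertible :: "'a::{ring,monoid_mult} mat3 \<Rightarrow> 3 \<Rightarrow> 3 \<Rightarrow> bool" where
  "minor_invertible X k j \<longleftrightarrow>
     invertible2 (X (k + 1) (j + 1)) (X (k + 1) (j + 2)) (X (k + 2) (j + 1)) (X (k + 2) (j + 2))"

lemma minor_invertible_if_sub_invertible:
  "sub_invertible X (UNIV - {k}) (UNIV - {j}) \<Longrightarrow> minor_invertible X k j"
  unfolding minor_invertible_def UNIV_3_minus
  by (rule invertible2_if_sub_invertible) (simp_all add: plus_3_simps)

lemma minor_invertible_uinv_transpose:
  assumes "minor_invertible X k j" and "\<And>j k. is_runit (X j k)"
  shows "minor_invertible (\<lambda>j k. uinv (X k j)) j k"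
  using invertible2_uinv_transpose assms unfolding minor_invertible_def by blast

lemma minor_invertible_diag_mult:
  assumes "minor_invertible X k j" and "\<And>i. is_runit (L i)" and "\<And>i. is_runit (R i)"
  shows "minor_invertible (\<lambda>i l. L i * X i l * R l) k j"
  using invertible2_diag_mult assms unfolding minor_invertible_def by blast

text \<open>Jacobi's complementary minor theorem: for \<open>Y = X\<^sup>-\<^sup>1\<close>, the entry \<open>Y j k\<close> is a unit iff the
  minor of \<open>X\<close> complementary to \<open>(k, j)\<close> is invertible.\<close>

lemma is_runit_inverse_entry:
  fixes X Y :: "'a::{ring,monoid_mult} mat3"
  assumes XY: "mmult X Y = mone" and YX: "mmult Y X = mone" and minor: "minor_invertible X k j"
  shows "is_runit (Y j k)"
proof -
  obtain a b c d where N: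
    "is_inverse2 (X (k+1) (j+1)) (X (k+1) (j+2)) (X (k+2) (j+1)) (X (k+2) (j+2)) a b c d"
    using minor unfolding minor_invertible_def invertible2_def by blast
  let ?t = "Y j k"
  define q where "q = X k j - X k (j+1) * (a * X (k+1) j + b * X (k+2) j)
    - X k (j+2) * (c * X (k+1) j + d * X (k+2) j)"
  have col: "X (k+1) (j+1) * Y (j+1) k + X (k+1) (j+2) * Y (j+2) k = - (X (k+1) j * ?t)"
    "X (k+2) (j+1) * Y (j+1) k + X (k+2) (j+2) * Y (j+2) k = - (X (k+2) j * ?t)"
    using mmult_eq_mone_rotate[OF XY, of "k+1" j k] mmult_eq_mone_rotate[OF XY, of "k+2" j k]
    by (simp_all add: plus_3_simps eq_neg_iff_add_eq_0 add_ac)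
  have row: "Y j (k+1) * X (k+1) (j+1) + Y j (k+2) * X (k+2) (j+1) = - (?t * X k (j+1))"
    "Y j (k+1) * X (k+1) (j+2) + Y j (k+2) * X (k+2) (j+2) = - (?t * X k (j+2))"
    using mmult_eq_mone_rotate[OF YX, of j k "j+1"] mmult_eq_mone_rotate[OF YX, of j k "j+2"]
    by (simp_all add: plus_3_simps eq_neg_iff_add_eq_0 add_ac)
  have "q * ?t = X k j * ?t + X k (j+1) * (a * - (X (k+1) j * ?t) + b * - (X (k+2) j * ?t))
      + X k (j+2) * (c * - (X (k+1) j * ?t) + d * - (X (k+2) j * ?t))"
    unfolding q_def by (simp add: algebra_simps)
  also have "\<dots> = 1"
    using mmult_eq_mone_rotate[OF XY, of k j k] is_inverse2_solve_column[OF N col] by simp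
  finally have left: "q * ?t = 1" .
  have "?t * q = ?t * X k j + (- (?t * X k (j+1)) * a + - (?t * X k (j+2)) * c) * X (k+1) j
      + (- (?t * X k (j+1)) * b + - (?t * X k (j+2)) * d) * X (k+2) j"
    unfolding q_def by (simp add: algebra_simps)
  also have "\<dots> = 1"
    using mmult_eq_mone_rotate[OF YX, of j k j] is_inverse2_solve_row[OF N row] by simp
  finally have right: "?t * q = 1" .
  from right left show ?thesis by (rule is_runitI)
qed

lemma minor_invertible_inverse:
  fixes X Y :: "'a::{ring,monoid_mult} mat3"
  assumes XY: "mmult X Y = mone" and YX: "mmult Y X = mone" and u: "is_runit (X j k)"
  shows "minor_invertible Y k j"
proof -
  \<comment> \<open>Eliminating row \<open>j\<close> and column \<open>k\<close> of \<open>X\<close>; the relevant block of \<open>Z\<close> inverts the minor.\<close>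
  define Z where "Z c r = X c r - X c k * uinv (X j k) * X j r" for c r
  have left: "Y r (j+1) * Z (j+1) r' + Y r (j+2) * Z (j+2) r' = (if r = r' then 1 else 0)"
    if "r \<noteq> k" for r r'
  proof -
    have "Y r (j+1) * Z (j+1) r' + Y r (j+2) * Z (j+2) r'
      = (Y r j * X j r' + Y r (j+1) * X (j+1) r' + Y r (j+2) * X (j+2) r')
      - (Y r j * X j k + Y r (j+1) * X (j+1) k + Y r (j+2) * X (j+2) k) * uinv (X j k) * X j r'
      + Y r j * (X j k * uinv (X j k)) * X j r' - Y r j * X j r'"
      unfolding Z_def by (simp add: algebra_simps)
    then show ?thesis
      using mmult_eq_mone_rotate[OF YX, of r j r'] mmult_eq_mone_rotate[OF YX, of r j k] that
      by (simp add: runit_inverse u)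
  qed
  have right: "Z c (k+1) * Y (k+1) c' + Z c (k+2) * Y (k+2) c' = (if c = c' then 1 else 0)"
    if "c' \<noteq> j" for c c'
  proof -
    have "Z c (k+1) * Y (k+1) c' + Z c (k+2) * Y (k+2) c'
      = (X c k * Y k c' + X c (k+1) * Y (k+1) c' + X c (k+2) * Y (k+2) c')
      - X c k * uinv (X j k) * (X j k * Y k c' + X j (k+1) * Y (k+1) c' + X j (k+2) * Y (k+2) c')
      + X c k * (uinv (X j k) * X j k) * Y k c' - X c k * Y k c'"
      unfolding Z_def by (simp add: algebra_simps)
    then show ?thesis
      using mmult_eq_mone_rotate[OF XY, of c k c'] mmult_eq_mone_rotate[OF XY, of j k c'] that
      by (simp add: runit_inverse u)
  qed
  have "is_inverse2 (Y (k+1) (j+1)) (Y (k+1) (j+2)) (Y (k+2) (j+1)) (Y (k+2) (j+2))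
     (Z (j+1) (k+1)) (Z (j+1) (k+2)) (Z (j+2) (k+1)) (Z (j+2) (k+2))"
    unfolding is_inverse2_def
    using left[of "k+1" "k+1"] left[of "k+1" "k+2"] left[of "k+2" "k+1"] left[of "k+2" "k+2"]
      right[of "j+1" "j+1"] right[of "j+1" "j+2"] right[of "j+2" "j+1"] right[of "j+2" "j+2"]
    by (simp add: plus_3_simps)
  then show ?thesis unfolding minor_invertible_def by (rule invertible2I)
qed

section \<open>Matrices with first row and column of ones\<close>

lemma hat_inverse_block:
  fixes X :: "'a::{ring,monoid_mult} mat3"
  assumes h: "hat X" and XZ: "mmult X Z = mone" and ZX: "mmult Z X = mone"
  shows "is_inverse2 (X 1 1 - 1) (X 1 2 - 1) (X 2 1 - 1) (X 2 2 - 1) (Z 1 1) (Z 1 2) (Z 2 1) (Z 2 2)"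
proof -
  have X0: "X 0 k = 1" "X j 0 = 1" for j k using h unfolding hat_def by auto
  have right: "(X j 1 - 1) * Z 1 k + (X j 2 - 1) * Z 2 k = (if j = k then 1 else 0)"
    if "k \<noteq> 0" for j k
  proof -
    have "Z 0 k + X j 1 * Z 1 k + X j 2 * Z 2 k = (if j = k then 1 else 0)"
      and "Z 0 k + Z 1 k + Z 2 k = 0"
      using mmult_eq_mone_entry[OF XZ, of j k] mmult_eq_mone_entry[OF XZ, of 0 k] X0 that
      by simp_all
    moreover have "(X j 1 - 1) * Z 1 k + (X j 2 - 1) * Z 2 k
      = (Z 0 k + X j 1 * Z 1 k + X j 2 * Z 2 k) - (Z 0 k + Z 1 k + Z 2 k)"
      by (simp add: algebra_simps)
    ultimately show ?thesis by simp
  qed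
  have left: "Z j 1 * (X 1 k - 1) + Z j 2 * (X 2 k - 1) = (if j = k then 1 else 0)"
    if "j \<noteq> 0" for j k
  proof -
    have "Z j 0 + Z j 1 * X 1 k + Z j 2 * X 2 k = (if j = k then 1 else 0)"
      and "Z j 0 + Z j 1 + Z j 2 = 0"
      using mmult_eq_mone_entry[OF ZX, of j k] mmult_eq_mone_entry[OF ZX, of j 0] X0 that
      by simp_all
    moreover have "Z j 1 * (X 1 k - 1) + Z j 2 * (X 2 k - 1)
      = (Z j 0 + Z j 1 * X 1 k + Z j 2 * X 2 k) - (Z j 0 + Z j 1 + Z j 2)"
      by (simp add: algebra_simps)
    ultimately show ?thesis by simp
  qed
  show ?thesis unfolding is_inverse2_def
    using right[of 1 1] right[of 1 2] right[of 2 1] right[of 2 2]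
      left[of 1 1] left[of 1 2] left[of 2 1] left[of 2 2] by simp
qed

lemma mat_invertible_hatI:
  fixes X :: "'a::{ring,monoid_mult} mat3"
  assumes h: "hat X" and inv: "invertible2 (X 1 1 - 1) (X 1 2 - 1) (X 2 1 - 1) (X 2 2 - 1)"
  shows "mat_invertible X"
proof -
  obtain a b c d where "is_inverse2 (X 1 1 - 1) (X 1 2 - 1) (X 2 1 - 1) (X 2 2 - 1) a b c d"
    using inv unfolding invertible2_def by blast
  then have e: "(X 1 1 - 1)*a + (X 1 2 - 1)*c = 1" "(X 1 1 - 1)*b + (X 1 2 - 1)*d = 0"
    "(X 2 1 - 1)*a + (X 2 2 - 1)*c = 0" "(X 2 1 - 1)*b + (X 2 2 - 1)*d = 1"
    "a*(X 1 1 - 1) + b*(X 2 1 - 1) = 1" "a*(X 1 2 - 1) + b*(X 2 2 - 1) = 0"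
    "c*(X 1 1 - 1) + d*(X 2 1 - 1) = 0" "c*(X 1 2 - 1) + d*(X 2 2 - 1) = 1"
    unfolding is_inverse2_def by auto
  have X0: "X 0 0 = 1" "X 0 1 = 1" "X 0 2 = 1" "X 1 0 = 1" "X 2 0 = 1"
    using h unfolding hat_def by auto
  define Z :: "'a mat3" where "Z j k =
    (if j = 0 then (if k = 0 then 1 + (a + b + c + d) else if k = 1 then - (a + c) else - (b + d))
     else if j = 1 then (if k = 0 then - (a + b) else if k = 1 then a else b)
     else (if k = 0 then - (c + d) else if k = 1 then c else d))" for j k
  have Z: "Z 0 0 = 1 + (a + b + c + d)" "Z 0 1 = - (a + c)" "Z 0 2 = - (b + d)"
    "Z 1 0 = - (a + b)" "Z 1 1 = a" "Z 1 2 = b" "Z 2 0 = - (c + d)" "Z 2 1 = c" "Z 2 2 = d"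
    unfolding Z_def by simp_all
  have "mmult X Z j k = mone j k" and "mmult Z X j k = mone j k" for j k
    using exhaust_3[of j] exhaust_3[of k] e
    by (elim disjE; simp add: mmult_entry mone_def X0 Z algebra_simps)+
  then have "mmult X Z = mone" and "mmult Z X = mone" by (simp_all add: fun_eq_iff)
  then show ?thesis unfolding mat_invertible_def by blast
qed

lemma hat_left_inverse_entries:
  fixes A B :: "'a::{ring,monoid_mult} mat3"
  assumes h: "hat A" and BA: "mmult B A = mone"
    and j: "j \<noteq> 0" "jb \<noteq> 0" "j \<noteq> jb" and k: "k \<noteq> 0" "kb \<noteq> 0" "k \<noteq> kb"
    and units: "is_runit (B k j)" "is_runit (A jb kb)" "is_runit (A jb kb - 1)"
  shows "B 0 j * uinv (B k j) * B k 0 = B 0 0 - uinv (1 - uinv (A jb kb))"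
proof -
  have A0: "A 0 c = 1" "A c 0 = 1" for c using h unfolding hat_def by auto
  let ?a = "uinv (A jb kb)"
  define z where "z = 1 - ?a"
  have "B 0 0 + B 0 j + B 0 jb = 1"
    and "B 0 0 + B 0 j * A j kb + B 0 jb * A jb kb = 0"
    and "B k 0 + B k j + B k jb = 0"
    and "B k 0 + B k j * A j kb + B k jb * A jb kb = 0"
    using mmult_eq_mone_split[OF BA j, of 0 0] mmult_eq_mone_split[OF BA j, of 0 kb]
      mmult_eq_mone_split[OF BA j, of k 0] mmult_eq_mone_split[OF BA j, of k kb] A0 k
    by simp_all
  moreover have "B i 0 * z + B i j * (1 - A j kb * ?a)
    = (B i 0 + B i j + B i jb) - (B i 0 + B i j * A j kb + B i jb * A jb kb) * ?a
      + B i jb * (A jb kb * ?a) - B i jb" for i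
    unfolding z_def by (simp add: algebra_simps)
  ultimately have row0: "B 0 0 * z + B 0 j * (1 - A j kb * ?a) = 1"
    and rowk: "B k 0 * z + B k j * (1 - A j kb * ?a) = 0"
    using runit_inverse[OF units(2)] by simp_all
  from rowk have "B k j * (1 - A j kb * ?a) = - (B k 0 * z)"
    by (simp add: eq_neg_iff_add_eq_0 add.commute)
  then have "1 - A j kb * ?a = - (uinv (B k j) * B k 0 * z)"
    using runit_cancel(2)[OF units(1), of "1 - A j kb * ?a"] by (simp add: mult.assoc)
  with row0 have "(B 0 0 - B 0 j * uinv (B k j) * B k 0) * z = 1"
    by (simp add: algebra_simps)
  moreover have "is_runit z"
    unfolding z_def using units(2,3) by (rule is_runit_one_minus_uinv)
  ultimately have "B 0 0 - B 0 j * uinv (B k j) * B k 0 = uinv z"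
    using runit_cancel_right(1)[of z "B 0 0 - B 0 j * uinv (B k j) * B k 0"] by simp
  then show ?thesis unfolding z_def by (simp add: algebra_simps)
qed

section \<open>Diagonal rescaling and \<open>\<Lambda>\<^sup>L\<close>\<close>

lemma diag_equiv_conj_mat:
  fixes x :: "'a::{ring,monoid_mult}"
  assumes ux: "is_runit x"
  shows "diag_equiv (conj_mat x M) M"
proof -
  define D :: "'a mat3" where "D j k = (if j = k then uinv x else 0)" for j k
  define D' :: "'a mat3" where "D' j k = (if j = k then x else 0)" for j k
  have "mmult D D' j k = mone j k" and "mmult D' D j k = mone j k"
    and "M j k = mmult (mmult D' (conj_mat x M)) D j k" for j k
    using exhaust_3[of j] exhaust_3[of k] runit_inverse[OF ux]
    by (elim disjE; simp add: mmult_entry mone_def D_def D'_def conj_mat_def mult.assoc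
        runit_cancel ux)+
  then have "mmult D D' = mone" "mmult D' D = mone" "M = mmult (mmult D' (conj_mat x M)) D"
    by (simp_all add: fun_eq_iff)
  moreover have "is_diag D" unfolding is_diag_def D_def by simp
  ultimately show ?thesis
    unfolding diag_equiv_def mat_invertible_def using minv_eqI by metis
qed

lemma LambdaL_diag_mult:
  fixes X :: "'a::{ring,monoid_mult} mat3"
  assumes "\<And>j k. is_runit (X j k)" and "\<And>j. is_runit (L j)" and "\<And>k. is_runit (R k)"
  shows "LambdaL (\<lambda>j k. L j * X j k * R k) = conj_mat (uinv (L 0)) (LambdaL X)"
  unfolding LambdaL_def conj_mat_def
  by (simp add: fun_eq_iff assms uinv_mult is_runit_mult uinv_uinv mult.assoc runit_cancel)

lemma uinv_conj:
  fixes x b :: "'a::{ring,monoid_mult}"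
  assumes "is_runit x" and "is_runit b"
  shows "uinv (uinv x * b * x) = uinv x * uinv b * x"
  using assms by (intro uinv_eqI) (simp_all add: mult.assoc runit_cancel runit_inverse)

lemma LambdaL_uinv_transpose:
  fixes C :: "'a::{ring,monoid_mult} mat3"
  assumes "\<And>j k. is_runit (C j k)"
  shows "(\<lambda>j k. uinv (LambdaL (\<lambda>j k. uinv (C k j)) k j)) = LambdaR C"
  unfolding LambdaL_def LambdaR_def
  by (simp add: fun_eq_iff assms uinv_mult is_runit_mult is_runit_uinv uinv_uinv mult.assoc)

section \<open>Two steps of \<open>\<Phi>\<close>\<close>

locale hat_S_matrix =
  fixes A :: "'a::{ring,monoid_mult} mat3"
  assumes in_S: "in_S A" and hat: "hat A"
begin

lemma A_first [simp]: "A 0 k = 1" "A j 0 = 1"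
  using hat unfolding hat_def by auto

lemma sub_invertible_A: "I \<noteq> {} \<Longrightarrow> card I = card K \<Longrightarrow> sub_invertible A I K"
  using in_S unfolding in_S_def by blast

lemma is_runit_A: "is_runit (A j k)"
  using sub_invertible_A[of "{j}" "{k}"] by (simp add: is_runit_if_sub_invertible_singleton)

lemma mat_invertible_A: "mat_invertible A"
  using sub_invertible_A[of UNIV UNIV] by (simp add: mat_invertible_if_sub_invertible_UNIV)

lemma minor_invertible_A: "minor_invertible A k j"
  by (rule minor_invertible_if_sub_invertible, rule sub_invertible_A)
    (simp_all add: UNIV_3_minus plus_3_simps)

lemma invertible2_A_first_row:
  assumes "j \<noteq> 0" and "k \<noteq> k'"
  shows "invertible2 1 1 (A j k) (A j k')"
  using invertible2_if_sub_invertible[of 0 j k k' A] sub_invertible_A[of "{0, j}" "{k, k'}"] assms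
  by simp

lemma is_runit_A_minus_one:
  assumes "j \<noteq> 0" and "k \<noteq> 0"
  shows "is_runit (A j k - 1)"
  using is_runit_schur_complement[OF invertible2_A_first_row[OF assms(1), of 0 k]] assms
  by (simp add: is_runit_one uinv_one)

lemma is_runit_A_row_difference: "is_runit (A 1 (l + 1) - A 1 (l + 2))"
proof -
  have "is_runit (A 1 (l + 2) - A 1 (l + 1))"
    using is_runit_schur_complement[OF invertible2_A_first_row[of 1 "l + 1" "l + 2"]]
    by (simp add: plus_3_simps is_runit_one uinv_one)
  then show ?thesis using is_runit_minus by fastforce
qed

definition B :: "'a mat3" where "B = minv A"

lemma A_B: "mmult A B = mone" and B_A: "mmult B A = mone"
  unfolding B_def using mat_invertible_A by (simp_all add: mmult_minv_right mmult_minv_left)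

lemma is_runit_B: "is_runit (B j k)"
  by (rule is_runit_inverse_entry[OF A_B B_A minor_invertible_A])

definition H :: "'a mat3" where "H = (\<lambda>j k. uinv (A k j))"

lemma J2_A: "J2 A = Some H"
  unfolding J2_def H_def all_units_def using is_runit_A by simp

lemma mat_invertible_H: "mat_invertible H"
  using in_S J2_A unfolding in_S_def by simp

lemma hat_H: "hat H"
  unfolding hat_def H_def by (simp add: uinv_one)

definition C :: "'a mat3" where "C = minv H"

lemma H_C: "mmult H C = mone" and C_H: "mmult C H = mone"
  unfolding C_def using mat_invertible_H by (simp_all add: mmult_minv_right mmult_minv_left)

lemma is_runit_C: "is_runit (C j k)"
  using is_runit_inverse_entry[OF H_C C_H] minor_invertible_uinv_transpose[OF minor_invertible_A is_runit_A]
  unfolding H_def by blast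

lemma Phi_inv_A: "Phi_inv A = Some (LambdaR C)"
proof -
  have "Jinv A = Some C"
    unfolding Jinv_def pcomp_def J2_A J1_def C_def using mat_invertible_H by simp
  then show ?thesis unfolding Phi_inv_def using hat is_runit_C by (simp add: all_units_def)
qed

definition P :: "'a mat3" where "P = (\<lambda>j k. uinv (LambdaL B k j))"

lemma P_eq: "P j k = B 0 j * uinv (B k j) * B k 0 * uinv (B 0 0)"
  unfolding P_def LambdaL_def
  by (simp add: is_runit_B uinv_mult is_runit_mult is_runit_uinv uinv_uinv mult.assoc)

lemma is_runit_P: "is_runit (P j k)"
  unfolding P_eq by (simp add: is_runit_B is_runit_mult is_runit_uinv)

lemma hat_P: "hat P"
  unfolding hat_def P_eq by (simp add: mult.assoc runit_cancel runit_inverse is_runit_B)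

lemma Phi_A: "Phi A = Some P"
proof -
  have "J A = Some (\<lambda>j k. uinv (B k j))"
    unfolding J_def pcomp_def J1_def J2_def B_def[symmetric] all_units_def
    using mat_invertible_A is_runit_B by simp
  moreover have "all_units (LambdaL B)"
    unfolding all_units_def LambdaL_def by (simp add: is_runit_B is_runit_mult is_runit_uinv)
  ultimately show ?thesis
    unfolding Phi_def P_def J2_def B_def[symmetric] using hat is_runit_A by (simp add: all_units_def)
qed

lemma P_minus_one:
  assumes "j \<noteq> 0" "jb \<noteq> 0" "j \<noteq> jb" and "k \<noteq> 0" "kb \<noteq> 0" "k \<noteq> kb"
  shows "P j k - 1 = uinv (1 - uinv (A jb kb)) * - uinv (B 0 0)"
proof -
  have "P j k = (B 0 j * uinv (B k j) * B k 0) * uinv (B 0 0)"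
    unfolding P_eq ..
  also have "\<dots> = (B 0 0 - uinv (1 - uinv (A jb kb))) * uinv (B 0 0)"
    using hat_left_inverse_entries[OF hat B_A assms is_runit_B is_runit_A is_runit_A_minus_one]
      assms by simp
  finally show ?thesis by (simp add: algebra_simps runit_inverse is_runit_B)
qed

text \<open>The block \<open>P j k - 1\<close> (\<open>j, k \<noteq> 0\<close>) is a right multiple of the antitransposed entrywise
  inverse of the corresponding block of \<open>1 - H\<close>, which is invertible because \<open>H\<close> is.\<close>

lemma mat_invertible_P: "mat_invertible P"
proof (rule mat_invertible_hatI[OF hat_P])
  define z where "z u v = 1 - uinv (A u v)" for u v
  have z_unit: "is_runit (z u v)" if "u \<noteq> 0" "v \<noteq> 0" for u v
    unfolding z_def using is_runit_A is_runit_A_minus_one[OF that] by (rule is_runit_one_minus_uinv)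
  have "invertible2 (H 1 1 - 1) (H 1 2 - 1) (H 2 1 - 1) (H 2 2 - 1)"
    using hat_inverse_block[OF hat_H H_C C_H] by (rule invertible2I)
  then have "invertible2 (z 1 1) (z 2 1) (z 1 2) (z 2 2)"
    using invertible2_uminus unfolding H_def z_def by fastforce
  then have "invertible2 (uinv (z 2 2)) (uinv (z 2 1)) (uinv (z 1 2)) (uinv (z 1 1))"
    by (rule invertible2_uinv_antitranspose) (simp_all add: z_unit)
  then have "invertible2 (1 * uinv (z 2 2) * - uinv (B 0 0)) (1 * uinv (z 2 1) * - uinv (B 0 0))
      (1 * uinv (z 1 2) * - uinv (B 0 0)) (1 * uinv (z 1 1) * - uinv (B 0 0))"
    by (rule invertible2_diag_mult) (simp_all add: is_runit_one is_runit_minus is_runit_uinv is_runit_B)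
  then show "invertible2 (P 1 1 - 1) (P 1 2 - 1) (P 2 1 - 1) (P 2 2 - 1)"
    using P_minus_one[of 1 2 1 2] P_minus_one[of 1 2 2 1] P_minus_one[of 2 1 1 2]
      P_minus_one[of 2 1 2 1] unfolding z_def by simp
qed

definition Q :: "'a mat3" where "Q = minv P"

lemma P_Q: "mmult P Q = mone" and Q_P: "mmult Q P = mone"
  unfolding Q_def using mat_invertible_P by (simp_all add: mmult_minv_right mmult_minv_left)

text \<open>\<open>P\<close> is a diagonal rescaling of the entrywise inverse of \<open>B\<^sup>T\<close>, whose minors are invertible
  by Jacobi's theorem applied to \<open>A\<close> and \<open>B\<close>.\<close>

lemma minor_invertible_P: "minor_invertible P k j"
proof -
  have "minor_invertible (\<lambda>j k. uinv (B k j)) k j"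
    by (rule minor_invertible_uinv_transpose[OF minor_invertible_inverse[OF A_B B_A is_runit_A]
          is_runit_B])
  then have "minor_invertible (\<lambda>i l. B 0 i * uinv (B l i) * (B l 0 * uinv (B 0 0))) k j"
    by (rule minor_invertible_diag_mult) (simp_all add: is_runit_B is_runit_mult is_runit_uinv)
  moreover have "(\<lambda>i l. B 0 i * uinv (B l i) * (B l 0 * uinv (B 0 0))) = P"
    by (simp add: fun_eq_iff P_eq mult.assoc)
  ultimately show ?thesis by simp
qed

lemma is_runit_Q: "is_runit (Q j k)"
  by (rule is_runit_inverse_entry[OF P_Q Q_P minor_invertible_P])

lemma B_row_relation:
  "B l 0 * (t (l+1) - t (l+2)) + B l 1 * (A 1 (l+1) * t (l+1) - A 1 (l+2) * t (l+2))
    + B l 2 * (A 2 (l+1) * t (l+1) - A 2 (l+2) * t (l+2)) = 0"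
proof -
  have col: "B l 0 + B l 1 * A 1 m + B l 2 * A 2 m = 0" if "m \<noteq> l" for m
    using mmult_eq_mone_entry[OF B_A, of l m] that by simp
  have "B l 0 * (t (l+1) - t (l+2)) + B l 1 * (A 1 (l+1) * t (l+1) - A 1 (l+2) * t (l+2))
      + B l 2 * (A 2 (l+1) * t (l+1) - A 2 (l+2) * t (l+2))
    = (B l 0 + B l 1 * A 1 (l+1) + B l 2 * A 2 (l+1)) * t (l+1)
      - (B l 0 + B l 1 * A 1 (l+2) + B l 2 * A 2 (l+2)) * t (l+2)"
    by (simp add: algebra_simps)
  then show ?thesis using col[of "l+1"] col[of "l+2"] by (simp add: plus_3_simps)
qed

lemma C_column_relation:
  "(t (l+1) - t (l+2)) * C 0 l + (t (l+1) * uinv (A 1 (l+1)) - t (l+2) * uinv (A 1 (l+2))) * C 1 l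
    + (t (l+1) * uinv (A 2 (l+1)) - t (l+2) * uinv (A 2 (l+2))) * C 2 l = 0"
proof -
  have row: "C 0 l + uinv (A 1 m) * C 1 l + uinv (A 2 m) * C 2 l = 0" if "m \<noteq> l" for m
    using mmult_eq_mone_entry[OF H_C, of m l] that unfolding H_def by (simp add: uinv_one)
  have "(t (l+1) - t (l+2)) * C 0 l + (t (l+1) * uinv (A 1 (l+1)) - t (l+2) * uinv (A 1 (l+2))) * C 1 l
      + (t (l+1) * uinv (A 2 (l+1)) - t (l+2) * uinv (A 2 (l+2))) * C 2 l
    = t (l+1) * (C 0 l + uinv (A 1 (l+1)) * C 1 l + uinv (A 2 (l+1)) * C 2 l)
      - t (l+2) * (C 0 l + uinv (A 1 (l+2)) * C 1 l + uinv (A 2 (l+2)) * C 2 l)"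
    by (simp add: algebra_simps)
  then show ?thesis using row[of "l+1"] row[of "l+2"] by (simp add: plus_3_simps)
qed

definition d :: "3 \<Rightarrow> 'a" where "d l = B l 1 * (A 1 (l+1) - A 1 (l+2)) * C 0 l"

lemma is_runit_d: "is_runit (d l)"
  unfolding d_def by (simp add: is_runit_mult is_runit_B is_runit_C is_runit_A_row_difference)

text \<open>Each off-diagonal pair \<open>(j, k)\<close> admits a factorisation
  \<open>d l = B l j * (g (l+1) - g (l+2)) * C k l\<close>, obtained by alternately applying the two relations
  above.\<close>

lemma d_factorisations:
  "d l = B l 2 * (A 2 (l+2) - A 2 (l+1)) * C 0 l"
  "d l = B l 1 * (A 1 (l+2) * uinv (A 2 (l+2)) - A 1 (l+1) * uinv (A 2 (l+1))) * C 2 l"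
  "d l = B l 0 * (uinv (A 2 (l+1)) - uinv (A 2 (l+2))) * C 2 l"
  "d l = B l 2 * (A 2 (l+1) * uinv (A 1 (l+1)) - A 2 (l+2) * uinv (A 1 (l+2))) * C 1 l"
  "d l = B l 0 * (uinv (A 1 (l+2)) - uinv (A 1 (l+1))) * C 1 l"
proof -
  note A_inverse = runit_inverse[OF is_runit_A]
  have "B l 1 * (A 1 (l+1) - A 1 (l+2)) = B l 2 * (A 2 (l+2) - A 2 (l+1))"
    using B_row_relation[of l "\<lambda>_. 1"] by (simp add: algebra_simps)
  then show d2: "d l = B l 2 * (A 2 (l+2) - A 2 (l+1)) * C 0 l"
    unfolding d_def by simp
  have "(A 1 (l+1) - A 1 (l+2)) * C 0 l
    = (A 1 (l+2) * uinv (A 2 (l+2)) - A 1 (l+1) * uinv (A 2 (l+1))) * C 2 l"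
    using C_column_relation[of "\<lambda>m. A 1 m" l] by (simp add: A_inverse algebra_simps)
  then show d3: "d l = B l 1 * (A 1 (l+2) * uinv (A 2 (l+2)) - A 1 (l+1) * uinv (A 2 (l+1))) * C 2 l"
    unfolding d_def by (simp add: mult.assoc)
  have "B l 1 * (A 1 (l+2) * uinv (A 2 (l+2)) - A 1 (l+1) * uinv (A 2 (l+1)))
    = B l 0 * (uinv (A 2 (l+1)) - uinv (A 2 (l+2)))"
    using B_row_relation[of l "\<lambda>m. uinv (A 2 m)"] by (simp add: A_inverse algebra_simps)
  then show "d l = B l 0 * (uinv (A 2 (l+1)) - uinv (A 2 (l+2))) * C 2 l"
    unfolding d3 by simp
  have "(A 2 (l+2) - A 2 (l+1)) * C 0 l
    = (A 2 (l+1) * uinv (A 1 (l+1)) - A 2 (l+2) * uinv (A 1 (l+2))) * C 1 l"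
    using C_column_relation[of "\<lambda>m. A 2 m" l] by (simp add: A_inverse algebra_simps)
  then show d5: "d l = B l 2 * (A 2 (l+1) * uinv (A 1 (l+1)) - A 2 (l+2) * uinv (A 1 (l+2))) * C 1 l"
    unfolding d2 by (simp add: mult.assoc)
  have "B l 2 * (A 2 (l+1) * uinv (A 1 (l+1)) - A 2 (l+2) * uinv (A 1 (l+2)))
    = B l 0 * (uinv (A 1 (l+2)) - uinv (A 1 (l+1)))"
    using B_row_relation[of l "\<lambda>m. uinv (A 1 m)"] by (simp add: A_inverse algebra_simps)
  then show "d l = B l 0 * (uinv (A 1 (l+2)) - uinv (A 1 (l+1))) * C 1 l"
    unfolding d5 by simp
qed

lemma sum_d_telescope:
  assumes "\<And>l. d l = B l j * (g (l+1) - g (l+2)) * C k l"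
  shows "(\<Sum>l\<in>UNIV. uinv (B l j) * d l * uinv (C k l)) = 0"
proof -
  have "uinv (B l j) * d l * uinv (C k l) = g (l+1) - g (l+2)" for l
    unfolding assms by (simp add: mult.assoc runit_cancel runit_inverse is_runit_B is_runit_C)
  then show ?thesis by (simp add: sum_UNIV_3_telescope)
qed

lemma sum_d_offdiagonal:
  assumes "j \<noteq> k"
  shows "(\<Sum>l\<in>UNIV. uinv (B l j) * d l * uinv (C k l)) = 0"
proof -
  have "j = 1 \<and> k = 0 \<or> j = 2 \<and> k = 0 \<or> j = 1 \<and> k = 2 \<or> j = 0 \<and> k = 2 \<or> j = 2 \<and> k = 1
    \<or> j = 0 \<and> k = 1"
    using assms exhaust_3[of j] exhaust_3[of k] by auto
  then show ?thesis
  proof (elim disjE conjE)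
    assume "j = 1" "k = 0"
    then show ?thesis by (intro sum_d_telescope[where g = "\<lambda>m. A 1 m"]) (simp add: d_def)
  next
    assume "j = 2" "k = 0"
    then show ?thesis by (intro sum_d_telescope[where g = "\<lambda>m. - A 2 m"]) (simp add: d_factorisations(1))
  next
    assume "j = 1" "k = 2"
    then show ?thesis
      by (intro sum_d_telescope[where g = "\<lambda>m. - (A 1 m * uinv (A 2 m))"]) (simp add: d_factorisations(2))
  next
    assume "j = 0" "k = 2"
    then show ?thesis
      by (intro sum_d_telescope[where g = "\<lambda>m. uinv (A 2 m)"]) (simp add: d_factorisations(3))
  next
    assume "j = 2" "k = 1"
    then show ?thesis
      by (intro sum_d_telescope[where g = "\<lambda>m. A 2 m * uinv (A 1 m)"]) (simp add: d_factorisations(4))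
  next
    assume "j = 0" "k = 1"
    then show ?thesis
      by (intro sum_d_telescope[where g = "\<lambda>m. - uinv (A 1 m)"]) (simp add: d_factorisations(5))
  qed
qed

definition D :: "3 \<Rightarrow> 'a" where "D l = B 0 0 * uinv (B l 0) * d l"

definition W :: "'a mat3" where "W l k = D l * uinv (C k l)"

lemma is_runit_D: "is_runit (D l)"
  unfolding D_def by (simp add: is_runit_mult is_runit_uinv is_runit_B is_runit_d)

lemma P_W_offdiagonal:
  assumes "j \<noteq> k"
  shows "mmult P W j k = 0"
proof -
  have "mmult P W j k = (\<Sum>l\<in>UNIV. B 0 j * (uinv (B l j) * d l * uinv (C k l)))"
    unfolding mmult_def P_eq W_def D_def by (simp add: mult.assoc runit_cancel is_runit_B)
  also have "\<dots> = B 0 j * (\<Sum>l\<in>UNIV. uinv (B l j) * d l * uinv (C k l))"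
    by (simp add: sum_distrib_left)
  finally show ?thesis using sum_d_offdiagonal[OF assms] by simp
qed

lemma W_eq_Q_mult: "W l k = Q l k * mmult P W k k"
proof -
  have "W l k = mmult Q (mmult P W) l k"
    by (simp add: mmult_assoc[symmetric] Q_P mmult_mone_left)
  also have "\<dots> = (\<Sum>m\<in>UNIV. Q l m * mmult P W m k)"
    by (simp only: mmult_def[of Q])
  also have "\<dots> = (\<Sum>m\<in>UNIV. if m = k then Q l k * mmult P W k k else 0)"
    by (rule sum.cong) (simp_all add: P_W_offdiagonal)
  finally show ?thesis by simp
qed

lemma is_runit_P_W_diagonal: "is_runit (mmult P W k k)"
proof -
  have "mmult P W k k = uinv (Q 0 k) * W 0 k"
    using W_eq_Q_mult[of 0 k] by (simp add: runit_cancel is_runit_Q)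
  then show ?thesis
    unfolding W_def by (simp add: is_runit_mult is_runit_uinv is_runit_Q is_runit_D is_runit_C)
qed

lemma Q_eq: "Q l k = D l * uinv (C k l) * uinv (mmult P W k k)"
  using W_eq_Q_mult[of l k] runit_cancel_right(1)[OF is_runit_P_W_diagonal, of "Q l k" k]
  unfolding W_def by simp

lemma Phi_P: "Phi P = Some (conj_mat (uinv (D 0)) (LambdaR C))"
proof -
  let ?C' = "\<lambda>l k. uinv (C k l)"
  have "J P \<noteq> None"
    unfolding J_def pcomp_def J1_def J2_def Q_def[symmetric] all_units_def
    using mat_invertible_P is_runit_Q by simp
  then have "Phi P = J2 (LambdaL Q)"
    unfolding Phi_def Q_def using hat_P is_runit_P by (simp add: all_units_def)
  also have "LambdaL Q = conj_mat (uinv (D 0)) (LambdaL ?C')"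
    using LambdaL_diag_mult[of ?C' D "\<lambda>k. uinv (mmult P W k k)"]
    by (simp add: Q_eq[abs_def] is_runit_C is_runit_uinv is_runit_D is_runit_P_W_diagonal)
  also have "J2 (conj_mat (uinv (D 0)) (LambdaL ?C'))
      = Some (conj_mat (uinv (D 0)) (\<lambda>j k. uinv (LambdaL ?C' k j)))"
  proof -
    have units: "is_runit (LambdaL ?C' j k)" for j k
      unfolding LambdaL_def by (simp add: is_runit_mult is_runit_uinv is_runit_C)
    show ?thesis
      unfolding J2_def all_units_def conj_mat_def
      by (simp add: units uinv_conj is_runit_mult is_runit_uinv is_runit_D)
  qed
  finally show ?thesis by (simp add: LambdaL_uinv_transpose is_runit_C)
qed

lemma Phi2_A: "Phi2 A = Some (conj_mat (uinv (D 0)) (LambdaR C))"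
  unfolding Phi2_def pcomp_def by (simp add: Phi_A Phi_P)

end

theorem theorem3:
  fixes A :: "'a::{ring,monoid_mult} mat3"
  assumes "in_S A" and "hat A"
  shows "\<exists>x B C. is_runit x \<and> Phi2 A = Some B \<and> Phi_inv A = Some C \<and>
           B = conj_mat x C \<and> diag_equiv B C"
proof -
  interpret hat_S_matrix A using assms by unfold_locales
  show ?thesis
    using Phi2_A Phi_inv_A is_runit_uinv[OF is_runit_D] diag_equiv_conj_mat by blast
qed

end
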